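(* Let $G$ be a graph, let $x$, $y$ be two vertices of $G$, and let $F_1, F_2, \ldots, F_c$ be the components of $G\setminus x\setminus y$. If $\rho^*_G(\{x,y\}, V(F_i))=2$ for all $1\le i\le c$, then $G$ has a vertex-minor isomorphic to the graph obtained from two disjoint copies of $K_c$ by adding a perfect matching between them (the $i$-th vertex of one copy joined to the $i$-th vertex of the other).
   Context: All graphs are simple. For disjoint $X,Y\subseteq V(G)$, $\rho^*_G(X,Y)$ denotes the rank over the binary field of the submatrix of the adjacency matrix of $G$ with rows indexed by $X$ and columns indexed by $Y$. A graph $H$ is a vertex-minor of $G$ if $H$ is an induced subgraph of a graph obtained from $G$ by a sequence of local complementations (local complementation at $v$ replaces the subgraph induced on the neighborhood of $v$ by its complement). *)

theory Defs
  imports Main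
begin

definition simple_graph :: "'a set \<Rightarrow> ('a \<Rightarrow> 'a \<Rightarrow> bool) \<Rightarrow> bool" where
  "simple_graph V E \<longleftrightarrow> finite V \<and> (\<forall>u v. E u v \<longrightarrow> u \<in> V \<and> v \<in> V \<and> u \<noteq> v)
     \<and> (\<forall>u v. E u v \<longrightarrow> E v u)"

definition local_comp :: "('a \<Rightarrow> 'a \<Rightarrow> bool) \<Rightarrow> 'a \<Rightarrow> ('a \<Rightarrow> 'a \<Rightarrow> bool)" where
  "local_comp E v = (\<lambda>a b. if a \<noteq> b \<and> E v a \<and> E v b then \<not> E a b else E a b)"

definition lc_seq :: "('a \<Rightarrow> 'a \<Rightarrow> bool) \<Rightarrow> 'a list \<Rightarrow> ('a \<Rightarrow> 'a \<Rightarrow> bool)" where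
  "lc_seq E vs = fold (\<lambda>v E'. local_comp E' v) vs E"

definition induced :: "('a \<Rightarrow> 'a \<Rightarrow> bool) \<Rightarrow> 'a set \<Rightarrow> ('a \<Rightarrow> 'a \<Rightarrow> bool)" where
  "induced E W = (\<lambda>a b. a \<in> W \<and> b \<in> W \<and> E a b)"

definition is_vertex_minor :: "'a set \<Rightarrow> ('a \<Rightarrow> 'a \<Rightarrow> bool) \<Rightarrow> 'a set \<Rightarrow> ('a \<Rightarrow> 'a \<Rightarrow> bool) \<Rightarrow> bool" where
  "is_vertex_minor V E W F \<longleftrightarrow>
     (\<exists>vs. set vs \<subseteq> V \<and> W \<subseteq> V \<and> F = induced (lc_seq E vs) W)"

definition graph_iso :: "'a set \<Rightarrow> ('a \<Rightarrow> 'a \<Rightarrow> bool) \<Rightarrow> 'b set \<Rightarrow> ('b \<Rightarrow> 'b \<Rightarrow> bool) \<Rightarrow> bool" where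
  "graph_iso V E V' E' \<longleftrightarrow>
     (\<exists>f. bij_betw f V V' \<and> (\<forall>a\<in>V. \<forall>b\<in>V. E a b \<longleftrightarrow> E' (f a) (f b)))"

definition matched_cliques_V :: "nat \<Rightarrow> (nat \<times> bool) set" where
  "matched_cliques_V c = {0..<c} \<times> (UNIV :: bool set)"

definition matched_cliques_E :: "nat \<times> bool \<Rightarrow> nat \<times> bool \<Rightarrow> bool" where
  "matched_cliques_E = (\<lambda>(i,p) (j,q). (p = q \<and> i \<noteq> j) \<or> (p \<noteq> q \<and> i = j))"

text \<open>Rank over GF(2) of the X-by-Y submatrix of the adjacency matrix, as row rank:
  a set S of rows is linearly independent over GF(2) iff no nonempty subset sums to zero.\<close>
definition gf2_indep :: "('a \<Rightarrow> 'a \<Rightarrow> bool) \<Rightarrow> 'a set \<Rightarrow> 'a set \<Rightarrow> bool" where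
  "gf2_indep E S Y \<longleftrightarrow>
     (\<forall>T. T \<subseteq> S \<and> T \<noteq> {} \<longrightarrow> \<not> (\<forall>y\<in>Y. even (card {x\<in>T. E x y})))"

definition gf2_rank :: "('a \<Rightarrow> 'a \<Rightarrow> bool) \<Rightarrow> 'a set \<Rightarrow> 'a set \<Rightarrow> nat" where
  "gf2_rank E X Y = Max {card S | S. S \<subseteq> X \<and> gf2_indep E S Y}"

definition components :: "'a set \<Rightarrow> ('a \<Rightarrow> 'a \<Rightarrow> bool) \<Rightarrow> 'a set set" where
  "components U E = (\<lambda>v. {w. (induced E U)\<^sup>*\<^sup>* v w}) ` U"

end

theory Submission
  imports Defs "HOL-Library.Transitive_Closure_Table"
begin

text \<open>Write U for V - {x, y} and call (E x p, E y p) the profile of p \<in> U; a component has rank 2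
  exactly when it contains two vertices with distinct nonzero profiles. A component with at least
  three vertices can be shrunk without losing rank 2 or connectivity: take a shortest path inside
  it between two such vertices; either it is a single edge, or its second vertex has profile zero
  and local complementation there bypasses it. So we may assume every component is an edge {a, b}.
  Local complementation at a adds the profile of a to that of b, which lets us bring all
  components to one common pair of profiles; local complementation at x and y (in an order
  depending on whether x and y are adjacent) then turns the vertices of each profile into a
  clique, while the component edges form the matching.\<close>

section \<open>Vertex-minors\<close>

lemma simple_graph_symp: "simple_graph V E \<Longrightarrow> symp E"
  by (simp add: simple_graph_def symp_def)

lemma simple_graph_irrefl: "simple_graph V E \<Longrightarrow> \<not> E a a"
  by (auto simp: simple_graph_def)

lemma simple_graph_local_comp: "simple_graph V E \<Longrightarrow> simple_graph V (local_comp E w)"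
  unfolding simple_graph_def local_comp_def by metis

lemma simple_graph_induced: "simple_graph V E \<Longrightarrow> W \<subseteq> V \<Longrightarrow> simple_graph W (induced E W)"
  unfolding simple_graph_def induced_def by (auto intro: finite_subset)

lemma induced_induced: "W \<subseteq> U \<Longrightarrow> induced (induced E U) W = induced E W"
  by (auto simp: induced_def fun_eq_iff)

lemma induced_local_comp: "v \<in> U \<Longrightarrow> induced (local_comp E v) U = local_comp (induced E U) v"
  by (auto simp: induced_def local_comp_def fun_eq_iff)

lemma induced_local_comp_eq:
  assumes "\<And>p q. p \<in> W \<Longrightarrow> q \<in> W \<Longrightarrow> E w p \<Longrightarrow> E w q \<Longrightarrow> p = q"
  shows "induced (local_comp E w) W = induced E W"
  using assms by (auto simp: induced_def local_comp_def fun_eq_iff)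

lemma lc_seq_append: "lc_seq E (vs @ ws) = lc_seq (lc_seq E vs) ws"
  by (simp add: lc_seq_def)

lemma lc_seq_induced: "set vs \<subseteq> U \<Longrightarrow> lc_seq (induced E U) vs = induced (lc_seq E vs) U"
proof (induction vs arbitrary: E)
  case Nil
  then show ?case by (simp add: lc_seq_def)
next
  case (Cons v vs)
  then show ?case by (simp add: lc_seq_def induced_local_comp[symmetric])
qed

lemma is_vertex_minor_trans:
  assumes "is_vertex_minor V E V' E'" and "is_vertex_minor V' E' W F"
  shows "is_vertex_minor V E W F"
proof -
  obtain vs where vs: "set vs \<subseteq> V" "V' \<subseteq> V" "E' = induced (lc_seq E vs) V'"
    using assms(1) by (auto simp: is_vertex_minor_def)
  obtain ws where ws: "set ws \<subseteq> V'" "W \<subseteq> V'" "F = induced (lc_seq E' ws) W"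
    using assms(2) by (auto simp: is_vertex_minor_def)
  have "F = induced (lc_seq E (vs @ ws)) W"
    using ws by (simp add: vs(3) lc_seq_induced lc_seq_append induced_induced)
  with vs ws show ?thesis
    unfolding is_vertex_minor_def by (intro exI[of _ "vs @ ws"]) auto
qed

lemma is_vertex_minor_induced: "W \<subseteq> V \<Longrightarrow> is_vertex_minor V E W (induced E W)"
  unfolding is_vertex_minor_def by (intro exI[of _ "[]"]) (simp add: lc_seq_def)

lemma simple_graph_induced_self: "simple_graph V E \<Longrightarrow> induced E V = E"
  by (auto simp: simple_graph_def induced_def fun_eq_iff)

lemma is_vertex_minor_refl: "simple_graph V E \<Longrightarrow> is_vertex_minor V E V E"
  using is_vertex_minor_induced[of V V E] by (simp add: simple_graph_induced_self)

lemma is_vertex_minor_local_comp: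
  assumes "simple_graph V E" and "w \<in> V"
  shows "is_vertex_minor V E V (local_comp E w)"
proof -
  have "local_comp E w = induced (lc_seq E [w]) V"
    using simple_graph_induced_self[OF simple_graph_local_comp[OF assms(1)]]
    by (simp add: lc_seq_def)
  with assms(2) show ?thesis
    unfolding is_vertex_minor_def by (intro exI[of _ "[w]"]) auto
qed

definition has_matched_cliques_minor :: "'a set \<Rightarrow> ('a \<Rightarrow> 'a \<Rightarrow> bool) \<Rightarrow> nat \<Rightarrow> bool" where
  "has_matched_cliques_minor V E c \<longleftrightarrow>
     (\<exists>W F. is_vertex_minor V E W F \<and> graph_iso W F (matched_cliques_V c) matched_cliques_E)"

lemma has_matched_cliques_minor_trans:
  "is_vertex_minor V E V' E' \<Longrightarrow> has_matched_cliques_minor V' E' c \<Longrightarrow> has_matched_cliques_minor V E c"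
  unfolding has_matched_cliques_minor_def by (meson is_vertex_minor_trans)

section \<open>Connected components\<close>

definition component :: "'a set \<Rightarrow> ('a \<Rightarrow> 'a \<Rightarrow> bool) \<Rightarrow> 'a \<Rightarrow> 'a set" where
  "component U E v = {w. (induced E U)\<^sup>*\<^sup>* v w}"

definition connected_on :: "('a \<Rightarrow> 'a \<Rightarrow> bool) \<Rightarrow> 'a set \<Rightarrow> bool" where
  "connected_on E D \<longleftrightarrow> (\<forall>a\<in>D. \<forall>b\<in>D. (induced E D)\<^sup>*\<^sup>* a b)"

lemma components_eq_image: "components U E = component U E ` U"
  by (simp add: components_def component_def)

lemma component_self: "v \<in> component U E v"
  by (simp add: component_def)

lemma component_in_components: "v \<in> U \<Longrightarrow> component U E v \<in> components U E"
  by (simp add: components_eq_image)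

lemma component_subset: "v \<in> U \<Longrightarrow> component U E v \<subseteq> U"
proof
  fix w assume "v \<in> U" "w \<in> component U E v"
  then have "(induced E U)\<^sup>*\<^sup>* v w" by (simp add: component_def)
  then show "w \<in> U" using \<open>v \<in> U\<close>
    by (induction rule: rtranclp_induct) (auto simp: induced_def)
qed

lemma symp_induced: "symp E \<Longrightarrow> symp (induced E U)"
  by (auto simp: symp_def induced_def)

lemma component_eq:
  assumes "symp E" and "w \<in> component U E v"
  shows "component U E w = component U E v"
proof -
  have vw: "(induced E U)\<^sup>*\<^sup>* v w" using assms(2) by (simp add: component_def)
  then have "(induced E U)\<^sup>*\<^sup>* w v"
    using symp_rtranclp[OF symp_induced[OF assms(1)]] by (blast dest: sympD)
  with vw show ?thesis
    unfolding component_def by (blast intro: rtranclp_trans)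
qed

lemma components_subset: "K \<in> components U E \<Longrightarrow> K \<subseteq> U"
  by (auto simp: components_eq_image dest: component_subset)

lemma components_nonempty: "K \<in> components U E \<Longrightarrow> K \<noteq> {}"
  by (auto simp: components_eq_image intro: component_self)

lemma finite_components: "finite U \<Longrightarrow> finite (components U E)"
  by (simp add: components_eq_image)

lemma components_mem_eq:
  assumes "symp E" and "K \<in> components U E" and "v \<in> K"
  shows "K = component U E v"
proof -
  obtain w where "K = component U E w"
    using assms(2) by (auto simp: components_eq_image)
  with assms(3) show ?thesis
    using component_eq[OF assms(1)] by simp
qed

lemma components_disjoint:
  "symp E \<Longrightarrow> K \<in> components U E \<Longrightarrow> K' \<in> components U E \<Longrightarrow> v \<in> K \<Longrightarrow> v \<in> K' \<Longrightarrow> K = K'"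
  using components_mem_eq by metis

lemma components_closed:
  assumes "symp E" and "K \<in> components U E" and "a \<in> K" and "b \<in> U" and "E a b"
  shows "b \<in> K"
proof -
  have "a \<in> U" using assms(2,3) components_subset by blast
  with assms(4,5) have "induced E U a b" by (simp add: induced_def)
  then show ?thesis
    using components_mem_eq[OF assms(1-3)] by (simp add: component_def)
qed

lemma components_induced: "U \<subseteq> W \<Longrightarrow> components U (induced E W) = components U E"
  by (simp add: components_def induced_induced)

lemma rtranclp_induced_closed:
  assumes "(induced E U)\<^sup>*\<^sup>* a b" and "a \<in> K" and "K \<subseteq> U"
    and "\<And>p q. p \<in> K \<Longrightarrow> q \<in> U \<Longrightarrow> E p q \<Longrightarrow> q \<in> K"
  shows "(induced E K)\<^sup>*\<^sup>* a b \<and> b \<in> K"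
  using assms(1)
proof (induction rule: rtranclp_induct)
  case (step p q)
  then have "p \<in> K" "q \<in> U" "E p q" by (auto simp: induced_def)
  then have "q \<in> K" using assms(4) by blast
  with \<open>p \<in> K\<close> \<open>E p q\<close> have "induced E K p q" by (simp add: induced_def)
  with step.IH \<open>q \<in> K\<close> show ?case by (meson rtranclp.rtrancl_into_rtrancl)
qed (simp add: assms(2))

lemma components_connected:
  assumes "symp E" and "K \<in> components U E"
  shows "connected_on E K"
  unfolding connected_on_def
proof (intro ballI)
  fix a b assume "a \<in> K" "b \<in> K"
  then have "(induced E U)\<^sup>*\<^sup>* a b"
    using components_mem_eq[OF assms \<open>a \<in> K\<close>] by (simp add: component_def)
  then show "(induced E K)\<^sup>*\<^sup>* a b"
    using rtranclp_induced_closed[OF _ \<open>a \<in> K\<close> components_subset[OF assms(2)]]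
      components_closed[OF assms] by blast
qed

lemma connected_on_cong: "induced E' D = induced E D \<Longrightarrow> connected_on E' D = connected_on E D"
  by (simp add: connected_on_def)

lemma components_eqI:
  assumes "\<forall>P\<in>\<P>. P \<noteq> {}" and "\<Union>\<P> = U" and "\<forall>P\<in>\<P>. connected_on E P"
    and "\<forall>P\<in>\<P>. \<forall>a\<in>P. \<forall>b\<in>U. E a b \<longrightarrow> b \<in> P"
  shows "components U E = \<P>"
proof -
  have component: "component U E v = P" if "P \<in> \<P>" "v \<in> P" for P v
  proof
    have "P \<subseteq> U" using assms(2) that(1) by blast
    then have "(induced E P)\<^sup>*\<^sup>* \<le> (induced E U)\<^sup>*\<^sup>*"
      by (intro rtranclp_mono) (auto simp: induced_def)
    then show "P \<subseteq> component U E v"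
      using assms(3) that unfolding connected_on_def component_def by blast
    show "component U E v \<subseteq> P"
    proof
      fix w assume "w \<in> component U E v"
      then have "(induced E U)\<^sup>*\<^sup>* v w" by (simp add: component_def)
      then show "w \<in> P"
      proof (induction rule: rtranclp_induct)
        case (step p q)
        then have "q \<in> U" "E p q" by (auto simp: induced_def)
        with step.IH show ?case using assms(4) that(1) by blast
      qed (rule that(2))
    qed
  qed
  have "component U E ` U \<subseteq> \<P>"
  proof
    fix K assume "K \<in> component U E ` U"
    then obtain v where "v \<in> U" "K = component U E v" by blast
    moreover from \<open>v \<in> U\<close> obtain P where "P \<in> \<P>" "v \<in> P" using assms(2) by blast
    ultimately show "K \<in> \<P>" using component by simp
  qed
  moreover have "\<P> \<subseteq> component U E ` U"
  proof
    fix P assume "P \<in> \<P>"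
    then obtain v where "v \<in> P" using assms(1) by blast
    with \<open>P \<in> \<P>\<close> assms(2) component show "P \<in> component U E ` U" by blast
  qed
  ultimately show ?thesis
    unfolding components_eq_image by blast
qed

lemma components_disjoint_Diff:
  assumes "symp E" and "C \<in> components U E" and "K \<in> components U E - {C}"
  shows "K \<inter> C = {}"
proof -
  have "K \<noteq> C" "K \<in> components U E" using assms(3) by auto
  then show ?thesis using components_disjoint[OF assms(1) _ assms(2)] by blast
qed

lemma Union_components_Diff:
  assumes "symp E" and "C \<in> components U E"
  shows "\<Union>(components U E - {C}) = U - C"
proof
  show "\<Union>(components U E - {C}) \<subseteq> U - C"
    using components_disjoint_Diff[OF assms] components_subset by fast
  show "U - C \<subseteq> \<Union>(components U E - {C})"
  proof
    fix u assume "u \<in> U - C"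
    then have "component U E u \<in> components U E - {C}" "u \<in> component U E u"
      using component_in_components component_self by fast+
    then show "u \<in> \<Union>(components U E - {C})" by blast
  qed
qed

lemma components_replace:
  assumes "symp E" and C: "C \<in> components U E" and "D \<subseteq> C" "D \<noteq> {}" "connected_on E' D"
    and agree: "\<And>a b. \<not> (a \<in> C \<and> b \<in> C) \<Longrightarrow> E' a b = E a b"
  shows "components (U - C \<union> D) E' = insert D (components U E - {C})"
proof (rule components_eqI)
  have disj: "K \<inter> C = {}" if "K \<in> components U E - {C}" for K
    using components_disjoint_Diff[OF assms(1) C that] .
  show "\<Union>(insert D (components U E - {C})) = U - C \<union> D"
    using Union_components_Diff[OF assms(1) C] by auto
  show "\<forall>P\<in>insert D (components U E - {C}). P \<noteq> {}"
    using assms(4) components_nonempty by blast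
  show "\<forall>P\<in>insert D (components U E - {C}). connected_on E' P"
  proof
    fix P assume P: "P \<in> insert D (components U E - {C})"
    show "connected_on E' P"
    proof (cases "P = D")
      case False
      with P have K: "P \<in> components U E - {C}" by blast
      then have "induced E' P = induced E P"
        using disj[OF K] agree by (auto simp: induced_def fun_eq_iff)
      with K show ?thesis
        using components_connected[OF assms(1)] connected_on_cong by blast
    qed (use assms(5) in simp)
  qed
  show "\<forall>P\<in>insert D (components U E - {C}). \<forall>a\<in>P. \<forall>b\<in>U - C \<union> D. E' a b \<longrightarrow> b \<in> P"
  proof (intro ballI impI)
    fix P a b assume P: "P \<in> insert D (components U E - {C})" and "a \<in> P"
      and b: "b \<in> U - C \<union> D" and "E' a b"
    show "b \<in> P"
    proof (cases "P = D")
      case True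
      show ?thesis
      proof (rule ccontr)
        assume "b \<notin> P"
        with b True have "b \<in> U - C" by blast
        with \<open>E' a b\<close> agree have "E a b" by blast
        moreover have "a \<in> C" using \<open>a \<in> P\<close> True \<open>D \<subseteq> C\<close> by blast
        ultimately have "b \<in> C"
          using components_closed[OF assms(1) C] \<open>b \<in> U - C\<close> by blast
        with \<open>b \<in> U - C\<close> show False by blast
      qed
    next
      case False
      with P have K: "P \<in> components U E - {C}" by blast
      with \<open>a \<in> P\<close> disj have "a \<notin> C" by blast
      with \<open>E' a b\<close> agree have "E a b" by blast
      moreover have "b \<in> U" using b \<open>D \<subseteq> C\<close> components_subset[OF C] by blast
      ultimately show ?thesis
        using components_closed[OF assms(1)] K \<open>a \<in> P\<close> by blast
    qed
  qed
qed

lemma rtrancl_path_reach: "rtrancl_path r a xs b \<Longrightarrow> z \<in> set (a # xs) \<Longrightarrow> r\<^sup>*\<^sup>* a z"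
proof (induction rule: rtrancl_path.induct)
  case (step a c cs b)
  then show ?case by (auto intro: converse_rtranclp_into_rtranclp)
qed simp

lemma rtrancl_path_suffix:
  assumes "rtrancl_path r a xs b" and "z \<in> set xs"
  obtains ys where "rtrancl_path r z ys b" and "length ys < length xs"
proof -
  obtain us vs where "xs = us @ z # vs" using split_list[OF assms(2)] by blast
  with assms(1) show ?thesis
    using that by (auto elim: rtrancl_path_appendE)
qed

lemma rtrancl_path_induced: "rtrancl_path r a xs b \<Longrightarrow> rtrancl_path (induced r (set (a # xs))) a xs b"
proof (induction rule: rtrancl_path.induct)
  case (base a)
  then show ?case by (rule rtrancl_path.base)
next
  case (step a c cs b)
  have "rtrancl_path (induced r (set (a # c # cs))) c cs b"
    by (rule rtrancl_path_mono[OF step.IH]) (auto simp: induced_def)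
  with step.hyps(1) show ?case
    by (auto simp: induced_def intro: rtrancl_path.step)
qed

lemma rtrancl_path_induced_set: "rtrancl_path (induced E C) a xs b \<Longrightarrow> set xs \<subseteq> C"
  by (induction rule: rtrancl_path.induct) (auto simp: induced_def)

lemma connected_on_path:
  assumes "symp E" and "rtrancl_path (induced E (set (a # xs))) a xs b"
  shows "connected_on E (set (a # xs))"
  unfolding connected_on_def
proof (intro ballI)
  fix p q assume "p \<in> set (a # xs)" "q \<in> set (a # xs)"
  then have "(induced E (set (a # xs)))\<^sup>*\<^sup>* a p" "(induced E (set (a # xs)))\<^sup>*\<^sup>* a q"
    using rtrancl_path_reach[OF assms(2)] by auto
  moreover have "symp (induced E (set (a # xs)))\<^sup>*\<^sup>*"
    using symp_rtranclp symp_induced assms(1) by blast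
  ultimately show "(induced E (set (a # xs)))\<^sup>*\<^sup>* p q"
    by (metis rtranclp_trans sympD)
qed

lemma connected_on_doubleton_edge:
  assumes "connected_on E {p, q}" and "p \<noteq> q" and "\<not> E p p"
  shows "E p q"
proof -
  have "(induced E {p, q})\<^sup>*\<^sup>* p q" using assms(1) by (simp add: connected_on_def)
  then show ?thesis
  proof (cases rule: converse_rtranclpE)
    case (step z)
    then show ?thesis using assms(2,3) by (auto simp: induced_def)
  qed (use assms(2) in simp)
qed

section \<open>Rank of two rows over GF(2)\<close>

text \<open>The rows of x and y of the adjacency matrix, restricted to the columns D, are nonzero and
  distinct, i.e. linearly independent over GF(2).\<close>
definition rows_independent :: "('a \<Rightarrow> 'a \<Rightarrow> bool) \<Rightarrow> 'a \<Rightarrow> 'a \<Rightarrow> 'a set \<Rightarrow> bool" where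
  "rows_independent E x y D \<longleftrightarrow> (\<exists>d\<in>D. E x d) \<and> (\<exists>d\<in>D. E y d) \<and> (\<exists>d\<in>D. E x d \<noteq> E y d)"

lemma card_filter_singleton: "card {z \<in> {x}. P z} = (if P x then 1 else 0)"
proof -
  have "{z \<in> {x}. P z} = (if P x then {x} else {})" by auto
  then show ?thesis by simp
qed

lemma card_filter_doubleton:
  assumes "x \<noteq> y"
  shows "card {z \<in> {x, y}. P z} = (if P x then 1 else 0) + (if P y then 1 else 0)"
proof -
  have "{z \<in> {x, y}. P z} = (if P x then {x} else {}) \<union> (if P y then {y} else {})" by auto
  with assms show ?thesis by (auto simp: card_insert_if)
qed

lemma gf2_indep_pair_iff:
  assumes "x \<noteq> y"
  shows "gf2_indep E {x, y} D \<longleftrightarrow> rows_independent E x y D"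
proof -
  have subsets: "T \<subseteq> {x, y} \<and> T \<noteq> {} \<longleftrightarrow> T = {x} \<or> T = {y} \<or> T = {x, y}" for T
    by auto
  have "gf2_indep E {x, y} D \<longleftrightarrow>
     \<not> (\<forall>d\<in>D. even (card {z \<in> {x}. E z d})) \<and> \<not> (\<forall>d\<in>D. even (card {z \<in> {y}. E z d}))
     \<and> \<not> (\<forall>d\<in>D. even (card {z \<in> {x, y}. E z d}))"
    unfolding gf2_indep_def subsets by blast
  also have "\<dots> \<longleftrightarrow> rows_independent E x y D"
    unfolding card_filter_singleton card_filter_doubleton[OF assms] rows_independent_def by auto
  finally show ?thesis .
qed

lemma gf2_rank_pair_eq_2_iff:
  assumes "x \<noteq> y"
  shows "gf2_rank E {x, y} D = 2 \<longleftrightarrow> rows_independent E x y D"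
proof -
  let ?ranks = "{card S | S. S \<subseteq> {x, y} \<and> gf2_indep E S D}"
  have "?ranks \<subseteq> card ` Pow {x, y}" by auto
  then have finite: "finite ?ranks" by (rule finite_subset) simp
  have le_2: "n \<le> 2" if "n \<in> ?ranks" for n
  proof -
    from that obtain S where "n = card S" "S \<subseteq> {x, y}" by blast
    then have "n \<le> card {x, y}" by (simp add: card_mono)
    with assms show ?thesis by simp
  qed
  have "0 \<in> ?ranks"
    by (rule CollectI, rule exI[of _ "{}"]) (auto simp: gf2_indep_def)
  have "Max ?ranks = 2 \<longleftrightarrow> 2 \<in> ?ranks"
  proof
    assume "Max ?ranks = 2"
    moreover have "Max ?ranks \<in> ?ranks"
      using Max_in[OF finite] \<open>0 \<in> ?ranks\<close> by blast
    ultimately show "2 \<in> ?ranks" by simp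
  next
    assume "2 \<in> ?ranks"
    then show "Max ?ranks = 2" using Max_eqI[OF finite] le_2 by blast
  qed
  also have "\<dots> \<longleftrightarrow> gf2_indep E {x, y} D"
  proof
    assume "2 \<in> ?ranks"
    then obtain S where "card S = 2" "S \<subseteq> {x, y}" "gf2_indep E S D" by auto
    moreover from this have "S = {x, y}"
      using assms by (metis card_2_iff card_subset_eq finite.emptyI finite.insertI)
    ultimately show "gf2_indep E {x, y} D" by simp
  next
    assume "gf2_indep E {x, y} D"
    moreover have "card {x, y} = 2" using assms by simp
    ultimately show "2 \<in> ?ranks" by (metis (mono_tags) mem_Collect_eq order_refl)
  qed
  finally show ?thesis
    by (simp add: gf2_rank_def gf2_indep_pair_iff[OF assms])
qed

lemma rows_independent_mono: "D \<subseteq> D' \<Longrightarrow> rows_independent E x y D \<Longrightarrow> rows_independent E x y D'"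
  unfolding rows_independent_def by blast

lemma rows_independent_cong:
  "(\<And>d. d \<in> D \<Longrightarrow> E' x d = E x d \<and> E' y d = E y d) \<Longrightarrow> rows_independent E' x y D = rows_independent E x y D"
  unfolding rows_independent_def by auto

lemma rows_independent_pair:
  assumes "rows_independent E x y D"
  obtains u v where "u \<in> D" "v \<in> D" "rows_independent E x y {u, v}"
proof -
  obtain a b c where "a \<in> D" "E x a" "b \<in> D" "E y b" "c \<in> D" "E x c \<noteq> E y c"
    using assms unfolding rows_independent_def by blast
  then show ?thesis
    using that[of c a] that[of c b] unfolding rows_independent_def by (cases "E x c") auto
qed

lemma rows_independent_card: "finite D \<Longrightarrow> rows_independent E x y D \<Longrightarrow> 2 \<le> card D"
  unfolding rows_independent_def
  by (metis card_le_Suc0_iff_eq not_less_eq_eq numeral_2_eq_2)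

definition rank2_pair :: "'a set \<Rightarrow> ('a \<Rightarrow> 'a \<Rightarrow> bool) \<Rightarrow> 'a \<Rightarrow> 'a \<Rightarrow> bool" where
  "rank2_pair V E x y \<longleftrightarrow> simple_graph V E \<and> x \<in> V \<and> y \<in> V \<and> x \<noteq> y \<and>
     (\<forall>C\<in>components (V - {x, y}) E. rows_independent E x y C)"

section \<open>Shrinking components with at least three vertices\<close>

lemma shrink_component:
  assumes G: "rank2_pair V E x y" and C: "C \<in> components (V - {x, y}) E"
    and E': "simple_graph V E'" and agree: "\<And>a b. \<not> (a \<in> C \<and> b \<in> C) \<Longrightarrow> E' a b = E a b"
    and D: "D \<subseteq> C" "connected_on E' D" "rows_independent E x y D"
  shows "rank2_pair (V - (C - D)) (induced E' (V - (C - D))) x y \<and>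
    card (components (V - (C - D) - {x, y}) (induced E' (V - (C - D)))) =
    card (components (V - {x, y}) E)"
proof -
  define V' where "V' = V - (C - D)"
  define CC where "CC = components (V - {x, y}) E"
  have sg: "simple_graph V E" and xy: "x \<in> V" "y \<in> V" "x \<noteq> y"
    and indep: "\<forall>K\<in>CC. rows_independent E x y K"
    using G by (auto simp: rank2_pair_def CC_def)
  have sym: "symp E" using simple_graph_symp[OF sg] .
  have CU: "C \<subseteq> V - {x, y}" using components_subset[OF C] .
  have "D \<noteq> {}" using D(3) by (auto simp: rows_independent_def)
  have U': "V' - {x, y} = (V - {x, y}) - C \<union> D" using CU D(1) by (auto simp: V'_def)
  have comps: "components (V' - {x, y}) (induced E' V') = insert D (CC - {C})"
    unfolding components_induced[of "V' - {x, y}" V', OF Diff_subset]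
    unfolding U' CC_def by (rule components_replace[OF sym C D(1) \<open>D \<noteq> {}\<close> D(2)]) (rule agree)
  have "D \<notin> CC - {C}"
  proof
    assume "D \<in> CC - {C}"
    then have "D \<in> components (V - {x, y}) E" "D \<noteq> C" by (simp_all add: CC_def)
    moreover obtain d where "d \<in> D" using \<open>D \<noteq> {}\<close> by blast
    ultimately show False
      using components_disjoint[OF sym _ C, of D d] D(1) by blast
  qed
  moreover have "finite CC"
    using sg by (simp add: CC_def simple_graph_def finite_components)
  moreover have "C \<in> CC" using C by (simp add: CC_def)
  ultimately have "card (insert D (CC - {C})) = card CC"
    by (metis card.insert card.remove finite_Diff)
  moreover have xy_V': "x \<in> V'" "y \<in> V'"
    using xy CU unfolding V'_def by blast+
  have "rows_independent (induced E' V') x y K" if "K \<in> insert D (CC - {C})" for K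
  proof -
    have "K \<in> components (V' - {x, y}) (induced E' V')"
      using that comps by simp
    then have "K \<subseteq> V'"
      using components_subset by blast
    then have "rows_independent (induced E' V') x y K = rows_independent E x y K"
      using xy_V' CU agree by (intro rows_independent_cong) (auto simp: induced_def)
    with that indep D(3) show ?thesis by auto
  qed
  ultimately show ?thesis
    unfolding V'_def[symmetric] CC_def[symmetric] rank2_pair_def comps
    using simple_graph_induced[OF E', of V'] xy_V' xy(3) by (simp add: V'_def)
qed

definition reducible_component :: "'a set \<Rightarrow> ('a \<Rightarrow> 'a \<Rightarrow> bool) \<Rightarrow> 'a \<Rightarrow> 'a \<Rightarrow> 'a set \<Rightarrow> bool" where
  "reducible_component V E x y C \<longleftrightarrow> (\<exists>E' D. is_vertex_minor V E V E' \<and> simple_graph V E' \<and>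
     (\<forall>a b. \<not> (a \<in> C \<and> b \<in> C) \<longrightarrow> E' a b = E a b) \<and>
     D \<subseteq> C \<and> D \<noteq> C \<and> connected_on E' D \<and> rows_independent E x y D)"

lemma shrink_reducible_component:
  assumes G: "rank2_pair V E x y" and C: "C \<in> components (V - {x, y}) E"
    and "reducible_component V E x y C"
  shows "\<exists>V' E'. card V' < card V \<and> rank2_pair V' E' x y \<and>
    card (components (V' - {x, y}) E') = card (components (V - {x, y}) E) \<and> is_vertex_minor V E V' E'"
proof -
  obtain E' D where vm: "is_vertex_minor V E V E'" and E': "simple_graph V E'"
    and agree: "\<forall>a b. \<not> (a \<in> C \<and> b \<in> C) \<longrightarrow> E' a b = E a b"
    and D: "D \<subseteq> C" "D \<noteq> C" "connected_on E' D" "rows_independent E x y D"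
    using assms(3) by (auto simp: reducible_component_def)
  have "C \<subseteq> V" using components_subset[OF C] by blast
  moreover have "finite V" using G by (simp add: rank2_pair_def simple_graph_def)
  ultimately have "card (V - (C - D)) < card V"
    using D(1,2) by (intro psubset_card_mono) auto
  moreover have "is_vertex_minor V E (V - (C - D)) (induced E' (V - (C - D)))"
    using is_vertex_minor_trans[OF vm is_vertex_minor_induced] by blast
  ultimately show ?thesis
    using shrink_component[OF G C E' _ D(1,3,4)] agree by blast
qed

lemma reducible_by_edge:
  assumes G: "rank2_pair V E x y" and "3 \<le> card C"
    and "u \<in> C" "v \<in> C" "E u v" "rows_independent E x y {u, v}"
  shows "reducible_component V E x y C"
proof -
  have sg: "simple_graph V E" using G by (simp add: rank2_pair_def)
  have "rtrancl_path (induced E (set [u, v])) u [v] v"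
    using assms(5) by (auto simp: induced_def intro: rtrancl_path.intros)
  then have "connected_on E {u, v}"
    using connected_on_path[OF simple_graph_symp[OF sg]] by fastforce
  moreover have "card {u, v} \<le> 2"
    by (simp add: card_insert_if)
  then have "{u, v} \<noteq> C"
    using assms(2) by auto
  ultimately show ?thesis
    unfolding reducible_component_def using assms(3,4,6) is_vertex_minor_refl[OF sg] sg
    by (intro exI[of _ E] exI[of _ "{u, v}"]) simp
qed

lemma rtrancl_path_last_mem: "rtrancl_path r a xs b \<Longrightarrow> b \<in> set (a # xs)"
  by (induction rule: rtrancl_path.induct) auto

text \<open>The induced path u w1 w2 \<dots> v, where w1 sees neither x nor y: local complementation at w1
  joins u to w2 and leaves the rest of the path intact, so the path minus w1 stays connected.\<close>
lemma reducible_by_local_comp: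
  assumes G: "rank2_pair V E x y" and C: "C \<in> components (V - {x, y}) E"
    and path: "rtrancl_path (induced E C) w2 rest v"
    and "u \<in> C" "w1 \<in> C" and uw1: "E u w1" and w12: "E w1 w2"
    and w1_xy: "\<not> E x w1" "\<not> E y w1" and u_w2: "u \<noteq> w2" "\<not> E u w2"
    and w1_rest: "\<forall>z\<in>set rest. \<not> E w1 z" "w1 \<notin> set rest"
    and uv: "rows_independent E x y {u, v}"
  shows "reducible_component V E x y C"
proof -
  have sg: "simple_graph V E" using G by (simp add: rank2_pair_def)
  have sym: "symp E" using simple_graph_symp[OF sg] .
  have "E w1 u" using uw1 sym by (meson sympD)
  have N: "p \<in> C" if "E w1 p" for p
  proof -
    have "p \<in> V - {x, y}"
      using that sg w1_xy sym by (auto simp: simple_graph_def symp_def)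
    then show ?thesis using components_closed[OF sym C \<open>w1 \<in> C\<close> _ that] by blast
  qed
  define E' where "E' = local_comp E w1"
  define D where "D = set (u # w2 # rest)"
  have agree: "\<forall>a b. \<not> (a \<in> C \<and> b \<in> C) \<longrightarrow> E' a b = E a b"
    using N by (auto simp: E'_def local_comp_def)
  have "D \<subseteq> C"
    using \<open>u \<in> C\<close> N[OF w12] rtrancl_path_induced_set[OF path] by (auto simp: D_def)
  moreover have "D \<noteq> C"
  proof -
    have "w1 \<noteq> u" "w1 \<noteq> w2" using uw1 w12 simple_graph_irrefl[OF sg] by auto
    with w1_rest(2) \<open>w1 \<in> C\<close> show ?thesis by (auto simp: D_def)
  qed
  moreover have "connected_on E' D"
  proof -
    have "induced E' (set (w2 # rest)) = induced E (set (w2 # rest))"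
      unfolding E'_def using w1_rest(1) by (intro induced_local_comp_eq) auto
    moreover have "rtrancl_path (induced E (set (w2 # rest))) w2 rest v"
      by (rule rtrancl_path_mono[OF rtrancl_path_induced[OF path]]) (auto simp: induced_def)
    ultimately have "rtrancl_path (induced E' (set (w2 # rest))) w2 rest v"
      by simp
    then have rest_path: "rtrancl_path (induced E' D) w2 rest v"
      by (rule rtrancl_path_mono) (auto simp: D_def induced_def)
    have "induced E' D u w2"
      using u_w2 \<open>E w1 u\<close> w12 by (simp add: D_def induced_def E'_def local_comp_def)
    from this rest_path have "rtrancl_path (induced E' D) u (w2 # rest) v"
      by (rule rtrancl_path.step)
    then show ?thesis
      unfolding D_def E'_def
      by (rule connected_on_path[OF simple_graph_symp[OF simple_graph_local_comp[OF sg]]])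
  qed
  moreover have "rows_independent E x y D"
    using rows_independent_mono[OF _ uv] rtrancl_path_last_mem[OF path] by (simp add: D_def)
  moreover have "w1 \<in> V" using \<open>w1 \<in> C\<close> components_subset[OF C] by blast
  ultimately show ?thesis
    unfolding reducible_component_def
    using is_vertex_minor_local_comp[OF sg] simple_graph_local_comp[OF sg] agree
    by (intro exI[of _ E'] exI[of _ D]) (simp add: E'_def)
qed

lemma rank2_path_shortcut:
  assumes uv: "rows_independent E x y {u, v}"
    and path: "rtrancl_path (induced E C) u (w1 # w2 # rest) v"
    and "E x w1 \<or> E y w1 \<or> u = w2 \<or> E u w2 \<or> (\<exists>z\<in>set rest. z = w1 \<or> E w1 z)"
  obtains u' v' xs where "rows_independent E x y {u', v'}" "rtrancl_path (induced E C) u' xs v'"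
    "length xs < length (w1 # w2 # rest)"
proof -
  from path have uw1: "induced E C u w1" and w12: "induced E C w1 w2"
    and rest: "rtrancl_path (induced E C) w2 rest v"
    by (auto elim!: rtrancl_path.cases)
  have "u \<in> C" "w1 \<in> C" "w2 \<in> C" using uw1 w12 by (auto simp: induced_def)
  consider (profile) "E x w1 \<or> E y w1" | (chord) "u = w2 \<or> E u w2"
    | (detour) z where "z \<in> set rest" "z = w1 \<or> E w1 z"
    using assms(3) by blast
  then show ?thesis
  proof cases
    case profile
    then have "rows_independent E x y {u, w1} \<or> rows_independent E x y {w1, v}"
      using uv by (auto simp: rows_independent_def)
    moreover have "rtrancl_path (induced E C) u [w1] w1"
      using uw1 by (auto intro: rtrancl_path.intros)
    moreover have "rtrancl_path (induced E C) w1 (w2 # rest) v"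
      using w12 rest by (rule rtrancl_path.step)
    ultimately show ?thesis
      using that by fastforce
  next
    case chord
    then have "rtrancl_path (induced E C) u (if u = w2 then rest else w2 # rest) v"
      using rest \<open>u \<in> C\<close> \<open>w2 \<in> C\<close> by (auto simp: induced_def intro: rtrancl_path.step)
    then show ?thesis
      using that[OF uv] by (simp split: if_splits)
  next
    case detour
    obtain ys where ys: "rtrancl_path (induced E C) z ys v" "length ys < length rest"
      using rtrancl_path_suffix[OF rest detour(1)] .
    have "z \<in> C" using rtrancl_path_induced_set[OF rest] detour(1) by blast
    then have "rtrancl_path (induced E C) w1 (if z = w1 then ys else z # ys) v"
      using detour(2) ys(1) \<open>w1 \<in> C\<close> by (auto simp: induced_def intro: rtrancl_path.step)
    with uw1 have "rtrancl_path (induced E C) u (w1 # (if z = w1 then ys else z # ys)) v"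
      by (rule rtrancl_path.step)
    then show ?thesis
      using that[OF uv] ys(2) by (simp split: if_splits)
  qed
qed

text \<open>Induction on the length of the path: any shortcut yields a shorter path between two
  vertices of rank 2, so only induced paths whose second vertex sees neither x nor y remain.\<close>
lemma reducible_along_path:
  assumes G: "rank2_pair V E x y" and C: "C \<in> components (V - {x, y}) E" and "3 \<le> card C"
  shows "rows_independent E x y {u, v} \<Longrightarrow> rtrancl_path (induced E C) u xs v \<Longrightarrow>
    reducible_component V E x y C"
proof (induction "length xs" arbitrary: u v xs rule: less_induct)
  case less
  note uv = less.prems(1) and path = less.prems(2)
  consider "xs = []" | w where "xs = [w]" | w1 w2 rest where "xs = w1 # w2 # rest"
    by (metis list.exhaust)
  then show ?case
  proof cases
    case 1
    with path uv show ?thesis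
      by (auto elim: rtrancl_path.cases simp: rows_independent_def)
  next
    case (2 w)
    with path have "induced E C u v"
      by (auto elim!: rtrancl_path.cases)
    with uv show ?thesis
      using reducible_by_edge[OF G assms(3)] by (auto simp: induced_def)
  next
    case (3 w1 w2 rest)
    show ?thesis
    proof (cases "E x w1 \<or> E y w1 \<or> u = w2 \<or> E u w2 \<or> (\<exists>z\<in>set rest. z = w1 \<or> E w1 z)")
      case True
      then show ?thesis
        using rank2_path_shortcut[OF uv path[unfolded 3]] less.hyps 3 by metis
    next
      case False
      from path 3 have "induced E C u w1" "induced E C w1 w2"
        and rest: "rtrancl_path (induced E C) w2 rest v"
        by (auto elim!: rtrancl_path.cases)
      with False show ?thesis
        using reducible_by_local_comp[OF G C rest _ _ _ _ _ _ _ _ _ _ uv] by (auto simp: induced_def)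
    qed
  qed
qed

lemma large_component_reducible:
  assumes G: "rank2_pair V E x y" and C: "C \<in> components (V - {x, y}) E" and "3 \<le> card C"
  shows "reducible_component V E x y C"
proof -
  have "rows_independent E x y C" using G C by (simp add: rank2_pair_def)
  then obtain u v where "u \<in> C" "v \<in> C" and uv: "rows_independent E x y {u, v}"
    by (rule rows_independent_pair)
  moreover have "connected_on E C"
    using components_connected[OF _ C] G simple_graph_symp by (auto simp: rank2_pair_def)
  ultimately obtain xs where "rtrancl_path (induced E C) u xs v"
    by (auto simp: connected_on_def rtranclp_eq_rtrancl_path)
  with uv show ?thesis
    using reducible_along_path[OF G C assms(3)] by blast
qed

section \<open>Components with two vertices\<close>

definition profile :: "('a \<Rightarrow> 'a \<Rightarrow> bool) \<Rightarrow> 'a \<Rightarrow> 'a \<Rightarrow> 'a \<Rightarrow> bool \<times> bool" where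
  "profile E x y p = (E x p, E y p)"

definition profile_add :: "bool \<times> bool \<Rightarrow> bool \<times> bool \<Rightarrow> bool \<times> bool" where
  "profile_add \<alpha> \<beta> = (fst \<alpha> \<noteq> fst \<beta>, snd \<alpha> \<noteq> snd \<beta>)"

lemma rows_independent_doubleton_iff:
  "rows_independent E x y {u, v} \<longleftrightarrow> profile E x y u \<noteq> profile E x y v \<and>
     profile E x y u \<noteq> (False, False) \<and> profile E x y v \<noteq> (False, False)"
  by (auto simp: rows_independent_def profile_def)

context
  fixes V E x y u v
  assumes G: "rank2_pair V E x y" and pair: "{u, v} \<in> components (V - {x, y}) E" and "u \<noteq> v"
begin

lemma pair_component_edge: "E u v"
proof -
  have "simple_graph V E" using G by (simp add: rank2_pair_def)
  then show ?thesis
    using connected_on_doubleton_edge components_connected[OF simple_graph_symp pair] \<open>u \<noteq> v\<close>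
      simple_graph_irrefl by metis
qed

lemma pair_component_neighbour: "E u p \<Longrightarrow> p \<in> V - {x, y} \<Longrightarrow> p = v"
  using G components_closed[OF _ pair, of u p] simple_graph_symp simple_graph_irrefl
  by (fastforce simp: rank2_pair_def)

lemma components_local_comp_pair:
  "components (V - {x, y}) (local_comp E u) = components (V - {x, y}) E"
proof -
  have "induced (local_comp E u) (V - {x, y}) = induced E (V - {x, y})"
    using pair_component_neighbour by (intro induced_local_comp_eq) blast
  then show ?thesis by (simp add: components_def)
qed

lemma profile_local_comp_pair:
  assumes "p \<in> V - {x, y}"
  shows "profile (local_comp E u) x y p =
    (if p = v then profile_add (profile E x y v) (profile E x y u) else profile E x y p)"
proof -
  have "symp E" using G simple_graph_symp by (auto simp: rank2_pair_def)
  moreover have "E u p \<longleftrightarrow> p = v"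
    using pair_component_neighbour[OF _ assms] pair_component_edge by blast
  ultimately show ?thesis
    using assms by (auto simp: profile_def profile_add_def local_comp_def dest: sympD)
qed

lemma local_comp_pair_xy: "local_comp E u x y \<longleftrightarrow> E x y \<noteq> (E x u \<and> E y u)"
  using G by (auto simp: rank2_pair_def local_comp_def dest: sympD[OF simple_graph_symp])

lemma profile_local_comp_pair_other:
  assumes "K \<in> components (V - {x, y}) E" and "K \<noteq> {u, v}" and "p \<in> K"
  shows "profile (local_comp E u) x y p = profile E x y p"
proof -
  have "v \<notin> K"
    using components_disjoint[OF _ assms(1) pair] assms(2) G simple_graph_symp
    by (auto simp: rank2_pair_def)
  moreover have "p \<in> V - {x, y}" using components_subset[OF assms(1)] assms(3) by blast
  ultimately show ?thesis using assms(3) profile_local_comp_pair by auto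
qed

lemma rank2_pair_local_comp_pair: "rank2_pair V (local_comp E u) x y"
proof -
  have "rows_independent (local_comp E u) x y K" if "K \<in> components (V - {x, y}) E" for K
  proof (cases "K = {u, v}")
    case True
    have "u \<in> V - {x, y}" "v \<in> V - {x, y}" using components_subset[OF pair] by auto
    moreover have "rows_independent E x y {u, v}" using G pair by (simp add: rank2_pair_def)
    ultimately show ?thesis
      unfolding True rows_independent_doubleton_iff using \<open>u \<noteq> v\<close>
      by (auto simp add: profile_local_comp_pair prod_eq_iff profile_add_def)
  next
    case False
    then show ?thesis
      using G that rows_independent_cong[of K "local_comp E u" x E y]
        profile_local_comp_pair_other[OF that False]
      by (simp add: rank2_pair_def profile_def)
  qed
  then show ?thesis
    using G components_local_comp_pair simple_graph_local_comp by (auto simp: rank2_pair_def)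
qed

end

text \<open>Local complementation at a vertex of a two-vertex component adds its profile to the profile of
  the other vertex and keeps E x y unless the vertex is adjacent to both x and y, so a decreasable
  potential can be driven to zero on all components.\<close>
definition decreasable_potential :: "((bool \<times> bool) set \<Rightarrow> nat) \<Rightarrow> bool" where
  "decreasable_potential d \<longleftrightarrow> (\<forall>\<alpha> \<beta>. \<alpha> \<noteq> \<beta> \<longrightarrow> \<alpha> \<noteq> (False, False) \<longrightarrow>
     \<beta> \<noteq> (False, False) \<longrightarrow> 0 < d {\<alpha>, \<beta>} \<longrightarrow>
     \<alpha> \<noteq> (True, True) \<and> d {\<alpha>, profile_add \<beta> \<alpha>} < d {\<alpha>, \<beta>} \<or>
     \<beta> \<noteq> (True, True) \<and> d {\<beta>, profile_add \<alpha> \<beta>} < d {\<alpha>, \<beta>})"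

lemma decrease_pair_component:
  assumes G: "rank2_pair V E x y" and C: "C \<in> components (V - {x, y}) E" "card C = 2"
    and d: "decreasable_potential d" "0 < d (profile E x y ` C)"
  obtains u v where "C = {u, v}" "u \<noteq> v" "profile E x y u \<noteq> (True, True)"
    "d (profile (local_comp E u) x y ` C) < d (profile E x y ` C)"
proof -
  obtain a b where ab: "C = {a, b}" "a \<noteq> b"
    using C(2) card_2_iff by metis
  have "rows_independent E x y {a, b}" using G C(1) ab by (simp add: rank2_pair_def)
  moreover have "profile E x y ` C = {profile E x y a, profile E x y b}" using ab by simp
  ultimately consider
    "profile E x y a \<noteq> (True, True)"
    "d {profile E x y a, profile_add (profile E x y b) (profile E x y a)} < d (profile E x y ` C)" |
    "profile E x y b \<noteq> (True, True)"
    "d {profile E x y b, profile_add (profile E x y a) (profile E x y b)} < d (profile E x y ` C)"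
    using d unfolding decreasable_potential_def rows_independent_doubleton_iff
    by (metis (no_types, lifting))
  then obtain u v where uv: "C = {u, v}" "u \<noteq> v" "profile E x y u \<noteq> (True, True)"
    and decrease: "d {profile E x y u, profile_add (profile E x y v) (profile E x y u)} <
      d (profile E x y ` C)"
  proof cases
    case 1
    then show ?thesis using that[of a b] ab by simp
  next
    case 2
    then show ?thesis using that[of b a] ab by (simp add: insert_commute)
  qed
  have "{u, v} \<subseteq> V - {x, y}" using components_subset[OF C(1)] uv(1) by simp
  then have "profile (local_comp E u) x y ` C =
      {profile E x y u, profile_add (profile E x y v) (profile E x y u)}"
    using profile_local_comp_pair[OF G C(1)[unfolded uv(1)] uv(2)] uv by simp
  with uv decrease show ?thesis using that by simp
qed

lemma normalize_pair_components:
  assumes "rank2_pair V E x y" and "\<forall>C\<in>components (V - {x, y}) E. card C = 2"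
    and d: "decreasable_potential d"
  shows "\<exists>E'. is_vertex_minor V E V E' \<and> rank2_pair V E' x y \<and>
    components (V - {x, y}) E' = components (V - {x, y}) E \<and> E' x y = E x y \<and>
    (\<forall>C\<in>components (V - {x, y}) E. d (profile E' x y ` C) = 0)"
  using assms(1,2)
proof (induction "\<Sum>C\<in>components (V - {x, y}) E. d (profile E x y ` C)" arbitrary: E rule: less_induct)
  case less
  let ?CC = "components (V - {x, y}) E"
  have sg: "simple_graph V E" using less.prems(1) by (simp add: rank2_pair_def)
  show ?case
  proof (cases "\<forall>C\<in>?CC. d (profile E x y ` C) = 0")
    case True
    then show ?thesis using less.prems(1) is_vertex_minor_refl[OF sg] by blast
  next
    case False
    then obtain C where C: "C \<in> ?CC" "0 < d (profile E x y ` C)" by auto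
    then obtain u v where uv: "C = {u, v}" "u \<noteq> v" "profile E x y u \<noteq> (True, True)"
      and decrease: "d (profile (local_comp E u) x y ` C) < d (profile E x y ` C)"
      using decrease_pair_component[OF less.prems(1) C(1) _ d] less.prems(2) by metis
    define E1 where "E1 = local_comp E u"
    have pair: "{u, v} \<in> ?CC" using C(1) uv(1) by simp
    have G1: "rank2_pair V E1 x y"
      unfolding E1_def by (rule rank2_pair_local_comp_pair[OF less.prems(1) pair uv(2)])
    have comps: "components (V - {x, y}) E1 = ?CC"
      unfolding E1_def by (rule components_local_comp_pair[OF less.prems(1) pair uv(2)])
    have "E1 x y = E x y"
      using local_comp_pair_xy[OF less.prems(1) pair uv(2)] uv(3) by (auto simp: E1_def profile_def)
    have same: "profile E1 x y ` K = profile E x y ` K" if "K \<in> ?CC" "K \<noteq> C" for K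
      using profile_local_comp_pair_other[OF less.prems(1) pair uv(2) that(1)] that(2) uv(1)
      unfolding E1_def by simp
    have "(\<Sum>K\<in>components (V - {x, y}) E1. d (profile E1 x y ` K)) <
      (\<Sum>K\<in>?CC. d (profile E x y ` K))"
      unfolding comps
    proof (rule sum_strict_mono_ex1)
      show "finite ?CC" using sg by (simp add: finite_components simple_graph_def)
      show "\<forall>K\<in>?CC. d (profile E1 x y ` K) \<le> d (profile E x y ` K)"
        using same decrease by (metis E1_def order.strict_implies_order order_refl)
      show "\<exists>K\<in>?CC. d (profile E1 x y ` K) < d (profile E x y ` K)"
        using C(1) decrease unfolding E1_def by blast
    qed
    then obtain E' where E': "is_vertex_minor V E1 V E'" "rank2_pair V E' x y"
      "components (V - {x, y}) E' = ?CC" "E' x y = E1 x y" "\<forall>C\<in>?CC. d (profile E' x y ` C) = 0"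
      using less.hyps[OF _ G1] less.prems(2) comps by auto
    moreover have "is_vertex_minor V E V E1"
      unfolding E1_def using is_vertex_minor_local_comp[OF sg] components_subset[OF C(1)] uv(1)
      by blast
    ultimately show ?thesis
      using is_vertex_minor_trans \<open>E1 x y = E x y\<close> by metis
  qed
qed

lemma pair_components_edge_iff:
  assumes "symp E" and "\<And>p. \<not> E p p" and pairs: "\<forall>C\<in>components U E. card C = 2"
    and "p \<in> U" "q \<in> U"
  shows "E p q \<longleftrightarrow> p \<noteq> q \<and> component U E p = component U E q"
proof
  assume "E p q"
  then have "q \<in> component U E p"
    using components_closed[OF assms(1) component_in_components[OF assms(4)] component_self assms(5)]
    by blast
  with \<open>E p q\<close> show "p \<noteq> q \<and> component U E p = component U E q"
    using assms(2) component_eq[OF assms(1)] by metis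
next
  assume pq: "p \<noteq> q \<and> component U E p = component U E q"
  define K where "K = component U E p"
  have K: "K \<in> components U E" using component_in_components[OF assms(4)] by (simp add: K_def)
  have "p \<in> K" "q \<in> K" using pq component_self by (metis K_def)+
  with pq pairs K have "K = {p, q}" by (metis card_2_iff doubleton_eq_iff insertE singletonD)
  then show "E p q"
    using connected_on_doubleton_edge components_connected[OF assms(1) K] pq assms(2) by metis
qed

lemma matched_cliques_iso:
  fixes side :: "'a \<Rightarrow> bool"
  assumes "symp E" and irrefl: "\<And>p. \<not> E p p" and "finite U"
    and pairs: "\<forall>C\<in>components U E. card C = 2 \<and> side ` C = UNIV"
    and F: "\<forall>p\<in>U. \<forall>q\<in>U. F p q \<longleftrightarrow> p \<noteq> q \<and> (E p q \<longleftrightarrow> side p \<noteq> side q)"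
  shows "graph_iso U F (matched_cliques_V (card (components U E))) matched_cliques_E"
proof -
  let ?CC = "components U E"
  obtain idx where idx: "bij_betw idx ?CC {0..<card ?CC}"
    using ex_bij_betw_finite_nat finite_components[OF assms(3)] by blast
  define h where "h p = (idx (component U E p), side p)" for p
  have idx_eq: "idx (component U E p) = idx (component U E q) \<longleftrightarrow> component U E p = component U E q"
    if "p \<in> U" "q \<in> U" for p q
    using idx component_in_components that unfolding bij_betw_def inj_on_def by metis
  have side_inj: "inj_on side K" if "K \<in> ?CC" for K
  proof (rule eq_card_imp_inj_on)
    show "finite K" using pairs that card.infinite by force
    show "card (side ` K) = card K" using pairs that by simp
  qed
  have unique: "p = q" if "p \<in> U" "q \<in> U" "component U E p = component U E q" "side p = side q" for p q
    using inj_onD[OF side_inj[OF component_in_components[OF that(1)]] that(4)]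
      component_self[of p U E] component_self[of q U E] that(3) by simp
  have "bij_betw h U (matched_cliques_V (card ?CC))"
    unfolding bij_betw_def
  proof
    show "inj_on h U"
      by (rule inj_onI) (use unique idx_eq in \<open>auto simp: h_def\<close>)
    show "h ` U = matched_cliques_V (card ?CC)"
    proof
      show "h ` U \<subseteq> matched_cliques_V (card ?CC)"
        using bij_betwE[OF idx] component_in_components[of _ U E] by (auto simp: h_def matched_cliques_V_def)
      show "matched_cliques_V (card ?CC) \<subseteq> h ` U"
      proof
        fix a assume "a \<in> matched_cliques_V (card ?CC)"
        then obtain i s where a: "a = (i, s)" "i < card ?CC" by (auto simp: matched_cliques_V_def)
        then obtain K where K: "K \<in> ?CC" "idx K = i"
          using idx by (metis atLeast0LessThan bij_betw_iff_bijections lessThan_iff)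
        then obtain p where "p \<in> K" "side p = s" using pairs by blast
        moreover have "p \<in> U" using K(1) \<open>p \<in> K\<close> components_subset by blast
        moreover have "component U E p = K" using components_mem_eq[OF assms(1) K(1) \<open>p \<in> K\<close>] ..
        ultimately show "a \<in> h ` U" using a K by (auto simp: h_def)
      qed
    qed
  qed
  moreover have "F p q \<longleftrightarrow> matched_cliques_E (h p) (h q)" if "p \<in> U" "q \<in> U" for p q
    using F pair_components_edge_iff[OF assms(1) irrefl _ that] pairs that idx_eq[OF that] unique[OF that]
    by (auto simp: h_def matched_cliques_E_def)
  ultimately show ?thesis
    unfolding graph_iso_def by blast
qed

lemma matched_cliques_minor_of_sides:
  fixes side :: "'a \<Rightarrow> bool"
  assumes G: "rank2_pair V E x y" and "set ws \<subseteq> V"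
    and sides: "\<forall>C\<in>components (V - {x, y}) E. card C = 2 \<and> side ` C = UNIV"
    and lc: "\<forall>p\<in>V - {x, y}. \<forall>q\<in>V - {x, y}.
      lc_seq E ws p q \<longleftrightarrow> p \<noteq> q \<and> (E p q \<longleftrightarrow> side p \<noteq> side q)"
  shows "has_matched_cliques_minor V E (card (components (V - {x, y}) E))"
proof -
  let ?U = "V - {x, y}"
  have sg: "simple_graph V E" using G by (simp add: rank2_pair_def)
  then have "finite ?U" by (simp add: simple_graph_def)
  with sides lc have "graph_iso ?U (induced (lc_seq E ws) ?U) (matched_cliques_V (card (components ?U E)))
      matched_cliques_E"
    by (intro matched_cliques_iso[OF simple_graph_symp[OF sg] simple_graph_irrefl[OF sg]])
      (auto simp: induced_def)
  moreover have "is_vertex_minor V E ?U (induced (lc_seq E ws) ?U)"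
    unfolding is_vertex_minor_def using assms(2) by auto
  ultimately show ?thesis
    unfolding has_matched_cliques_minor_def by blast
qed

lemma profile_in_component_profiles:
  assumes "p \<in> U" and "profile E x y ` component U E p = S"
  shows "profile E x y p \<in> S"
  using imageI[OF component_self[of p U E], of "profile E x y"] assms(2) by simp

lemma matched_cliques_minor_nonadjacent:
  assumes G: "rank2_pair V E x y" and "\<not> E x y"
    and types: "\<forall>C\<in>components (V - {x, y}) E.
      card C = 2 \<and> profile E x y ` C = {(True, False), (False, True)}"
  shows "has_matched_cliques_minor V E (card (components (V - {x, y}) E))"
proof (rule matched_cliques_minor_of_sides[OF G, of "[x, y]" "E x"])
  show "set [x, y] \<subseteq> V" using G by (simp add: rank2_pair_def)
  show "\<forall>C\<in>components (V - {x, y}) E. card C = 2 \<and> E x ` C = UNIV"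
  proof
    fix C assume "C \<in> components (V - {x, y}) E"
    then have "card C = 2" "profile E x y ` C = {(True, False), (False, True)}" using types by auto
    moreover have "E x ` C = fst ` profile E x y ` C" by (simp add: image_image profile_def)
    ultimately show "card C = 2 \<and> E x ` C = UNIV" by (simp add: UNIV_bool insert_commute)
  qed
  have "E y p \<longleftrightarrow> \<not> E x p" if "p \<in> V - {x, y}" for p
  proof -
    have "profile E x y ` component (V - {x, y}) E p = {(True, False), (False, True)}"
      using types component_in_components[OF that] by blast
    from profile_in_component_profiles[OF that this] show ?thesis by (auto simp: profile_def)
  qed
  moreover have "\<not> E p p" for p using G simple_graph_irrefl[of V E] by (simp add: rank2_pair_def)
  (* As x and y are not adjacent, complementing at x and then at y toggles pq exactly when
     p and q are both neighbours of x or both neighbours of y. *)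
  ultimately show "\<forall>p\<in>V - {x, y}. \<forall>q\<in>V - {x, y}.
      lc_seq E [x, y] p q \<longleftrightarrow> p \<noteq> q \<and> (E p q \<longleftrightarrow> E x p \<noteq> E x q)"
    using \<open>\<not> E x y\<close> by (auto simp: lc_seq_def local_comp_def)
qed

lemma matched_cliques_minor_adjacent:
  assumes G: "rank2_pair V E x y" and "E x y"
    and types: "\<forall>C\<in>components (V - {x, y}) E.
      card C = 2 \<and> profile E x y ` C = {(True, False), (True, True)}"
  shows "has_matched_cliques_minor V E (card (components (V - {x, y}) E))"
proof (rule matched_cliques_minor_of_sides[OF G, of "[y, x]" "E y"])
  show "set [y, x] \<subseteq> V" using G by (simp add: rank2_pair_def)
  show "\<forall>C\<in>components (V - {x, y}) E. card C = 2 \<and> E y ` C = UNIV"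
  proof
    fix C assume "C \<in> components (V - {x, y}) E"
    then have "card C = 2" "profile E x y ` C = {(True, False), (True, True)}" using types by auto
    moreover have "E y ` C = snd ` profile E x y ` C" by (simp add: image_image profile_def)
    ultimately show "card C = 2 \<and> E y ` C = UNIV" by (simp add: UNIV_bool insert_commute)
  qed
  have "E y x" using \<open>E x y\<close> G sympD[OF simple_graph_symp] by (auto simp: rank2_pair_def)
  moreover have "E x p" if "p \<in> V - {x, y}" for p
  proof -
    have "profile E x y ` component (V - {x, y}) E p = {(True, False), (True, True)}"
      using types component_in_components[OF that] by blast
    from profile_in_component_profiles[OF that this] show ?thesis by (auto simp: profile_def)
  qed
  moreover have "\<not> E p p" for p using G simple_graph_irrefl[of V E] by (simp add: rank2_pair_def)
  (* Since x is a neighbour of y, after complementing at y the neighbours of x in V - {x, y}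
     are exactly the non-neighbours of y. *)
  ultimately show "\<forall>p\<in>V - {x, y}. \<forall>q\<in>V - {x, y}.
      lc_seq E [y, x] p q \<longleftrightarrow> p \<noteq> q \<and> (E p q \<longleftrightarrow> E y p \<noteq> E y q)"
    by (auto simp: lc_seq_def local_comp_def)
qed

lemma pair_components_matched_cliques_minor:
  assumes G: "rank2_pair V E x y" and pairs: "\<forall>C\<in>components (V - {x, y}) E. card C = 2"
  shows "has_matched_cliques_minor V E (card (components (V - {x, y}) E))"
proof (cases "E x y")
  case True
  (* The profile set {(False, True), (True, True)} reaches the target only via
     {(True, False), (False, True)}. *)
  define d :: "(bool \<times> bool) set \<Rightarrow> nat" where
    "d S = (if S = {(True, False), (True, True)} then 0
      else if S = {(True, False), (False, True)} then 1 else 2)" for S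
  have potential: "decreasable_potential d"
    unfolding decreasable_potential_def split_paired_All all_bool_eq
    by (simp add: d_def profile_add_def doubleton_eq_iff)
  obtain E' where E': "is_vertex_minor V E V E'" "rank2_pair V E' x y"
    "components (V - {x, y}) E' = components (V - {x, y}) E" "E' x y"
    "\<forall>C\<in>components (V - {x, y}) E. d (profile E' x y ` C) = 0"
    using normalize_pair_components[OF G pairs potential] True by auto
  have "\<forall>C\<in>components (V - {x, y}) E'.
      card C = 2 \<and> profile E' x y ` C = {(True, False), (True, True)}"
    using E'(3,5) pairs by (auto simp: d_def split: if_splits)
  then show ?thesis
    using matched_cliques_minor_adjacent[OF E'(2,4)] E'(1,3) has_matched_cliques_minor_trans
    by metis
next
  case False
  define d :: "(bool \<times> bool) set \<Rightarrow> nat" where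
    "d S = (if S = {(True, False), (False, True)} then 0 else 1)" for S
  have potential: "decreasable_potential d"
    unfolding decreasable_potential_def split_paired_All all_bool_eq
    by (simp add: d_def profile_add_def doubleton_eq_iff)
  obtain E' where E': "is_vertex_minor V E V E'" "rank2_pair V E' x y"
    "components (V - {x, y}) E' = components (V - {x, y}) E" "\<not> E' x y"
    "\<forall>C\<in>components (V - {x, y}) E. d (profile E' x y ` C) = 0"
    using normalize_pair_components[OF G pairs potential] False by auto
  have "\<forall>C\<in>components (V - {x, y}) E'.
      card C = 2 \<and> profile E' x y ` C = {(True, False), (False, True)}"
    using E'(3,5) pairs by (auto simp: d_def split: if_splits)
  then show ?thesis
    using matched_cliques_minor_nonadjacent[OF E'(2,4)] E'(1,3) has_matched_cliques_minor_trans
    by metis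
qed

lemma rank2_pair_matched_cliques_minor:
  "rank2_pair V E x y \<Longrightarrow> has_matched_cliques_minor V E (card (components (V - {x, y}) E))"
proof (induction "card V" arbitrary: V E rule: less_induct)
  case less
  show ?case
  proof (cases "\<exists>C\<in>components (V - {x, y}) E. 3 \<le> card C")
    case True
    then obtain C where C: "C \<in> components (V - {x, y}) E" "3 \<le> card C" by blast
    obtain V' E' where "card V' < card V" "rank2_pair V' E' x y"
      "card (components (V' - {x, y}) E') = card (components (V - {x, y}) E)"
      "is_vertex_minor V E V' E'"
      using shrink_reducible_component[OF less.prems C(1) large_component_reducible[OF less.prems C]]
      by blast
    then show ?thesis
      using less.hyps has_matched_cliques_minor_trans by metis
  next
    case False
    have "card C = 2" if "C \<in> components (V - {x, y}) E" for C
    proof -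
      have "finite C"
        using less.prems components_subset[OF that] finite_subset
        by (auto simp: rank2_pair_def simple_graph_def)
      moreover have "rows_independent E x y C" using less.prems that by (simp add: rank2_pair_def)
      ultimately show ?thesis
        using rows_independent_card False that by fastforce
    qed
    then show ?thesis
      using pair_components_matched_cliques_minor[OF less.prems] by blast
  qed
qed

theorem lemma7p7:
  fixes V :: "'a set" and E :: "'a \<Rightarrow> 'a \<Rightarrow> bool" and x y :: 'a
  assumes "simple_graph V E"
    and "x \<in> V" and "y \<in> V" and "x \<noteq> y"
    and "\<forall>C \<in> components (V - {x, y}) E. gf2_rank E {x, y} C = 2"
  shows "\<exists>W F. is_vertex_minor V E W F \<and>
           graph_iso W F (matched_cliques_V (card (components (V - {x, y}) E))) matched_cliques_E"
proof -
  have "rank2_pair V E x y"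
    using assms gf2_rank_pair_eq_2_iff[OF assms(4)] by (simp add: rank2_pair_def)
  then have "has_matched_cliques_minor V E (card (components (V - {x, y}) E))"
    by (rule rank2_pair_matched_cliques_minor)
  then show ?thesis
    unfolding has_matched_cliques_minor_def .
qed

end
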